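(* Consider the partition posets of $\{1,\dots,n\}$ ordered by refinement (the operadic partition posets of the commutative operad $\operatorname{Com}$), with the labelling which labels the edge between a partition $(A_1,\dots,A_p)$ and the partition obtained by merging two parts $A_i$ and $A_j$ by $\max(\min A_i,\min A_j)$. This labelling is compatible with isomorphisms of subposets.
   Context: $\operatorname{Com}$ is the basic-set operad with a single element $e_n$ in each arity $n\ge1$, with $\gamma(e_p;e_{k_1},\dots,e_{k_p})=e_{k_1+\dots+k_p}$, generated by a binary symmetric operation; its $\operatorname{Com}$-partitions of a set are the usual set partitions and the order is refinement. For a covering $\lambda\prec\omega$ merging $A_i$ and $A_j$, set $D_\lambda^\omega=\{\min A_i,\min A_j\}$ and $\delta_\lambda^\omega$ the element $e_2$ on these two points; for a general $\lambda\le\omega$, $D_\lambda^\omega$ is the set of minima of the parts of $\lambda$ lying in parts of $\omega$ which are not parts of $\lambda$, and $\delta_\lambda^\omega$ the corresponding partition of $D_\lambda^\omega$ induced by $\omega$. Two interval subposets $\Pi_1,\Pi_2$ (of possibly different partition posets) with $E_i=\bigcup_{\lambda\le\omega\in\Pi_i}D_\lambda^\omega$ are isomorphic if there is a poset isomorphism $g:\Pi_1\to\Pi_2$ and an increasing bijection $f:E_1\to E_2$ with $\delta_{g(\lambda)}^{g(\omega)}=f(\delta_\lambda^\omega)$ for every covering $\lambda\prec\omega$. A family of labellings is compatible with isomorphisms of subposets if every such isomorphism induces a map on labels sending increasing chains to increasing chains, non-increasing chains to non-increasing chains, and preserving the lexicographic preorder on chains. *)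

theory Defs
  imports "HOL-Library.Disjoint_Sets"
begin

definition partitions :: "nat \<Rightarrow> nat set set set" where
  "partitions n = {P. partition_on {1..n} P}"

definition refines :: "nat set set \<Rightarrow> nat set set \<Rightarrow> bool" where
  "refines l w \<longleftrightarrow> (\<forall>A\<in>l. \<exists>B\<in>w. A \<subseteq> B)"

definition covers :: "nat \<Rightarrow> nat set set \<Rightarrow> nat set set \<Rightarrow> bool" where
  "covers n l w \<longleftrightarrow> l \<in> partitions n \<and> w \<in> partitions n \<and> refines l w \<and> l \<noteq> w \<and>
     \<not> (\<exists>m\<in>partitions n. refines l m \<and> refines m w \<and> m \<noteq> l \<and> m \<noteq> w)"

definition Dset :: "nat set set \<Rightarrow> nat set set \<Rightarrow> nat set" where
  "Dset l w = {Min A | A. A \<in> l \<and> (\<exists>B\<in>w. A \<subseteq> B \<and> B \<notin> l)}"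

definition delta :: "nat set set \<Rightarrow> nat set set \<Rightarrow> nat set set" where
  "delta l w = {B \<inter> Dset l w | B. B \<in> w \<and> B \<inter> Dset l w \<noteq> {}}"

text \<open>The labelling: for a covering merging A_i and A_j, max(min A_i, min A_j),
  i.e. the maximum of D = {min A_i, min A_j}.\<close>
definition com_label :: "nat set set \<Rightarrow> nat set set \<Rightarrow> nat" where
  "com_label l w = Max (Dset l w)"

definition interval :: "nat \<Rightarrow> nat set set \<Rightarrow> nat set set \<Rightarrow> nat set set set" where
  "interval n a b = {p \<in> partitions n. refines a p \<and> refines p b}"

definition Eset :: "nat \<Rightarrow> nat set set \<Rightarrow> nat set set \<Rightarrow> nat set" where
  "Eset n a b = \<Union> {Dset l w | l w. l \<in> interval n a b \<and> w \<in> interval n a b \<and> refines l w}"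

definition subposet_iso ::
  "nat \<Rightarrow> nat set set \<Rightarrow> nat set set \<Rightarrow> nat \<Rightarrow> nat set set \<Rightarrow> nat set set
   \<Rightarrow> (nat set set \<Rightarrow> nat set set) \<Rightarrow> (nat \<Rightarrow> nat) \<Rightarrow> bool" where
  "subposet_iso n1 a1 b1 n2 a2 b2 g f \<longleftrightarrow>
     a1 \<in> partitions n1 \<and> b1 \<in> partitions n1 \<and> refines a1 b1 \<and>
     a2 \<in> partitions n2 \<and> b2 \<in> partitions n2 \<and> refines a2 b2 \<and>
     bij_betw g (interval n1 a1 b1) (interval n2 a2 b2) \<and>
     (\<forall>x\<in>interval n1 a1 b1. \<forall>y\<in>interval n1 a1 b1. refines x y \<longleftrightarrow> refines (g x) (g y)) \<and>
     bij_betw f (Eset n1 a1 b1) (Eset n2 a2 b2) \<and> strict_mono_on (Eset n1 a1 b1) f \<and>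
     (\<forall>l\<in>interval n1 a1 b1. \<forall>w\<in>interval n1 a1 b1.
        covers n1 l w \<longrightarrow> delta (g l) (g w) = (\<lambda>X. f ` X) ` delta l w)"

definition max_chain :: "nat \<Rightarrow> nat set set \<Rightarrow> nat set set \<Rightarrow> nat set set list \<Rightarrow> bool" where
  "max_chain n a b cs \<longleftrightarrow> cs \<noteq> [] \<and> hd cs = a \<and> last cs = b \<and>
     (\<forall>i. Suc i < length cs \<longrightarrow> covers n (cs ! i) (cs ! Suc i))"

definition label_word :: "(nat set set \<Rightarrow> nat set set \<Rightarrow> nat) \<Rightarrow> nat set set list \<Rightarrow> nat list" where
  "label_word lab cs = map (\<lambda>(x, y). lab x y) (zip cs (tl cs))"

definition increasing_word :: "nat list \<Rightarrow> bool" where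
  "increasing_word ws \<longleftrightarrow> sorted_wrt (<) ws"

definition lex_le :: "nat list \<Rightarrow> nat list \<Rightarrow> bool" where
  "lex_le u v \<longleftrightarrow> u = v \<or> (u, v) \<in> lexord {(x, y). x < y}"

definition compatible_with_isos :: "(nat set set \<Rightarrow> nat set set \<Rightarrow> nat) \<Rightarrow> bool" where
  "compatible_with_isos lab \<longleftrightarrow>
    (\<forall>n1 a1 b1 n2 a2 b2 g f. subposet_iso n1 a1 b1 n2 a2 b2 g f \<longrightarrow>
       (\<forall>cs. max_chain n1 a1 b1 cs \<longrightarrow>
          (increasing_word (label_word lab cs) \<longrightarrow> increasing_word (label_word lab (map g cs))) \<and>
          (\<not> increasing_word (label_word lab cs) \<longrightarrow> \<not> increasing_word (label_word lab (map g cs)))) \<and>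
       (\<forall>cs ds. max_chain n1 a1 b1 cs \<longrightarrow> max_chain n1 a1 b1 ds \<longrightarrow>
          lex_le (label_word lab cs) (label_word lab ds) \<longrightarrow>
          lex_le (label_word lab (map g cs)) (label_word lab (map g ds))))"

end

theory Submission
  imports Defs
begin

text \<open>The label of a covering \<open>l \<prec> w\<close> is the largest element of \<open>D(l,w)\<close>, and \<open>D(l,w)\<close> is
  the union of the blocks of \<open>\<delta>(l,w)\<close>. An isomorphism of subposets transports \<open>\<delta>\<close>, hence \<open>D\<close>,
  along the increasing bijection \<open>f\<close>, and an increasing map commutes with taking maxima. So the
  label word of the image of a maximal chain is the \<open>f\<close>-image of its label word, and a strictly
  increasing map preserves and reflects increasing words and preserves the lexicographic order.\<close>

lemma strict_mono_on_sorted_wrt_less_iff: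
  fixes f :: "'a::linorder \<Rightarrow> 'b::linorder"
  assumes "strict_mono_on E f" "set xs \<subseteq> E"
  shows "sorted_wrt (<) (map f xs) \<longleftrightarrow> sorted_wrt (<) xs"
  using assms(2) by (induction xs) (auto simp: strict_mono_on_less[OF assms(1)] subset_iff)

lemma strict_mono_on_lexord_less:
  fixes f :: "'a::linorder \<Rightarrow> 'b::linorder"
  assumes "strict_mono_on E f" "set xs \<subseteq> E" "set ys \<subseteq> E"
    and "(xs, ys) \<in> lexord {(x, y). x < y}"
  shows "(map f xs, map f ys) \<in> lexord {(x, y). x < y}"
  using assms(2-4)
proof (induction xs arbitrary: ys)
  case Nil
  then show ?case by (cases ys) auto
next
  case (Cons x xs)
  then obtain y ys' where "ys = y # ys'" by (cases ys) auto
  with Cons show ?case by (auto simp: strict_mono_on_less[OF assms(1)])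
qed

lemma strict_mono_on_Max_image:
  fixes f :: "'a::linorder \<Rightarrow> 'b::linorder"
  assumes "strict_mono_on E f" "finite A" "A \<noteq> {}" "A \<subseteq> E"
  shows "Max (f ` A) = f (Max A)"
proof (rule Max_eqI)
  show "finite (f ` A)" using assms(2) by simp
  show "f (Max A) \<in> f ` A" using Max_in[OF assms(2,3)] by simp
next
  fix y assume "y \<in> f ` A"
  then obtain x where x: "x \<in> A" "y = f x" by blast
  moreover have "x \<in> E" "Max A \<in> E" using x(1) Max_in[OF assms(2,3)] assms(4) by auto
  ultimately show "y \<le> f (Max A)"
    using Max_ge[OF assms(2) x(1)] by (simp add: strict_mono_on_less_eq[OF assms(1)])
qed

lemma refines_refl: "refines l l"
  unfolding refines_def by blast

lemma refines_trans: "refines l m \<Longrightarrow> refines m w \<Longrightarrow> refines l w"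
  unfolding refines_def by (meson order_trans)

lemma Dset_subset:
  assumes "partition_on X l" "finite X"
  shows "Dset l w \<subseteq> X \<inter> \<Union> w"
proof
  fix x assume "x \<in> Dset l w"
  then obtain A B where x: "x = Min A" "A \<in> l" "B \<in> w" "A \<subseteq> B"
    unfolding Dset_def by blast
  have "A \<noteq> {}" "A \<subseteq> X" using assms(1) x(2) by (auto simp: partition_on_def)
  then have "Min A \<in> A" using assms(2) by (meson Min_in finite_subset)
  then show "x \<in> X \<inter> \<Union> w" using x \<open>A \<subseteq> X\<close> by blast
qed

lemma Dset_empty_imp_eq:
  assumes l: "partition_on X l" and w: "partition_on X w" and "refines l w"
    and empty: "Dset l w = {}"
  shows "l = w"
proof
  show "l \<subseteq> w"
  proof
    fix A assume A: "A \<in> l"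
    obtain B where B: "B \<in> w" "A \<subseteq> B" using \<open>refines l w\<close> A unfolding refines_def by blast
    have "B \<in> l" using A B empty unfolding Dset_def by blast
    moreover have "A \<noteq> {}" using l A by (auto simp: partition_on_def)
    ultimately have "A = B" using l A B(2) unfolding partition_on_def disjoint_def by blast
    with B show "A \<in> w" by simp
  qed
  show "w \<subseteq> l"
  proof
    fix C assume C: "C \<in> w"
    obtain x where x: "x \<in> C" using w C unfolding partition_on_def by (metis ex_in_conv)
    then obtain A where A: "A \<in> l" "x \<in> A" using w l C by (auto simp: partition_on_def)
    then have "A = C" using \<open>l \<subseteq> w\<close> w C x unfolding partition_on_def disjoint_def by blast
    with A show "C \<in> l" by simp
  qed
qed

lemma covers_Dset_nonempty:
  assumes "covers n l w"
  shows "Dset l w \<noteq> {}"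
  using assms Dset_empty_imp_eq[of "{1..n}" l w] unfolding covers_def partitions_def by auto

lemma finite_Dset: "l \<in> partitions n \<Longrightarrow> finite (Dset l w)"
  using Dset_subset[of "{1..n}" l w] unfolding partitions_def by (auto intro: finite_subset)

lemma Union_delta:
  assumes "l \<in> partitions n"
  shows "\<Union> (delta l w) = Dset l w"
proof -
  have covered: "Dset l w \<subseteq> \<Union> w"
    using assms Dset_subset[of "{1..n}" l w] unfolding partitions_def by auto
  show ?thesis
  proof
    show "\<Union> (delta l w) \<subseteq> Dset l w" unfolding delta_def by auto
    show "Dset l w \<subseteq> \<Union> (delta l w)"
    proof
      fix x assume x: "x \<in> Dset l w"
      with covered obtain B where "B \<in> w" "x \<in> B" by blast
      with x show "x \<in> \<Union> (delta l w)" unfolding delta_def by blast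
    qed
  qed
qed

lemma covers_com_label_in_Dset:
  assumes "covers n l w"
  shows "com_label l w \<in> Dset l w"
  using assms Max_in[OF finite_Dset covers_Dset_nonempty[OF assms]]
  unfolding com_label_def covers_def by blast

lemma subposet_iso_Dset:
  assumes iso: "subposet_iso n1 a1 b1 n2 a2 b2 g f"
    and l: "l \<in> interval n1 a1 b1" and w: "w \<in> interval n1 a1 b1" and "covers n1 l w"
  shows "Dset (g l) (g w) = f ` Dset l w"
proof -
  have "g l \<in> partitions n2" using iso l unfolding subposet_iso_def bij_betw_def interval_def by auto
  then have "Dset (g l) (g w) = \<Union> (delta (g l) (g w))" by (simp add: Union_delta)
  also have "\<dots> = f ` \<Union> (delta l w)"
    using iso l w \<open>covers n1 l w\<close> unfolding subposet_iso_def by auto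
  also have "\<dots> = f ` Dset l w"
    using l Union_delta[of l n1 w] unfolding interval_def by simp
  finally show ?thesis .
qed

lemma covers_Dset_subset_Eset:
  assumes "l \<in> interval n a b" "w \<in> interval n a b" "covers n l w"
  shows "Dset l w \<subseteq> Eset n a b"
  using assms unfolding Eset_def covers_def by blast

lemma subposet_iso_com_label:
  assumes iso: "subposet_iso n1 a1 b1 n2 a2 b2 g f"
    and l: "l \<in> interval n1 a1 b1" and w: "w \<in> interval n1 a1 b1" and c: "covers n1 l w"
  shows "com_label (g l) (g w) = f (com_label l w)"
proof -
  have "strict_mono_on (Eset n1 a1 b1) f" using iso unfolding subposet_iso_def by blast
  moreover have "finite (Dset l w)" using c finite_Dset unfolding covers_def by blast
  ultimately show ?thesis
    using strict_mono_on_Max_image covers_Dset_nonempty[OF c] covers_Dset_subset_Eset[OF l w c]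
    unfolding com_label_def subposet_iso_Dset[OF iso l w c] by blast
qed

lemma max_chain_refines:
  assumes "max_chain n a b cs" "i \<le> j" "j < length cs"
  shows "refines (cs ! i) (cs ! j)"
  using assms(2,3)
proof (induction j)
  case 0
  then show ?case by (simp add: refines_refl)
next
  case (Suc j)
  show ?case
  proof (cases "i = Suc j")
    case True
    then show ?thesis by (simp add: refines_refl)
  next
    case False
    then have "refines (cs ! i) (cs ! j)" using Suc by simp
    moreover have "covers n (cs ! j) (cs ! Suc j)"
      using assms(1) Suc.prems unfolding max_chain_def by blast
    ultimately show ?thesis unfolding covers_def using refines_trans by blast
  qed
qed

lemma max_chain_nth_in_interval:
  assumes "max_chain n a b cs" "a \<in> partitions n" "i < length cs"
  shows "cs ! i \<in> interval n a b"
proof -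
  have ends: "cs ! 0 = a" "cs ! (length cs - 1) = b"
    using assms(1) unfolding max_chain_def by (auto simp: hd_conv_nth last_conv_nth)
  have "refines a (cs ! i)" "refines (cs ! i) b"
    using max_chain_refines[OF assms(1), of 0 i] max_chain_refines[OF assms(1), of i "length cs - 1"]
      ends assms(3) by simp_all
  moreover have "cs ! i \<in> partitions n"
  proof (cases i)
    case 0
    then show ?thesis using ends assms(2) by simp
  next
    case (Suc k)
    then have "covers n (cs ! k) (cs ! i)" using assms(1,3) unfolding max_chain_def by auto
    then show ?thesis unfolding covers_def by simp
  qed
  ultimately show ?thesis unfolding interval_def by simp
qed

lemma max_chain_covers_in_interval:
  assumes "max_chain n a b cs" "a \<in> partitions n" "Suc i < length cs"
  shows "cs ! i \<in> interval n a b" "cs ! Suc i \<in> interval n a b" "covers n (cs ! i) (cs ! Suc i)"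
  using assms max_chain_nth_in_interval unfolding max_chain_def by auto

lemma subposet_iso_label_word:
  assumes iso: "subposet_iso n1 a1 b1 n2 a2 b2 g f" and mc: "max_chain n1 a1 b1 cs"
  shows "label_word com_label (map g cs) = map f (label_word com_label cs)"
  using subposet_iso_com_label[OF iso max_chain_covers_in_interval[OF mc]] iso
  unfolding label_word_def subposet_iso_def
  by (intro nth_equalityI) (auto simp: nth_tl)

lemma set_label_word_subset_Eset:
  assumes "max_chain n a b cs" "a \<in> partitions n"
  shows "set (label_word com_label cs) \<subseteq> Eset n a b"
proof -
  have "com_label (cs ! i) (cs ! Suc i) \<in> Eset n a b" if "Suc i < length cs" for i
  proof -
    note step = max_chain_covers_in_interval[OF assms that]
    show ?thesis using covers_Dset_subset_Eset[OF step] covers_com_label_in_Dset[OF step(3)] by blast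
  qed
  then show ?thesis unfolding label_word_def by (auto simp: set_conv_nth nth_tl)
qed

lemma subposet_iso_increasing_word_iff:
  assumes iso: "subposet_iso n1 a1 b1 n2 a2 b2 g f" and chain: "max_chain n1 a1 b1 cs"
  shows "increasing_word (label_word com_label (map g cs)) \<longleftrightarrow> increasing_word (label_word com_label cs)"
proof -
  have mono: "strict_mono_on (Eset n1 a1 b1) f" and a1_partition: "a1 \<in> partitions n1"
    using iso unfolding subposet_iso_def by blast+
  show ?thesis
    unfolding increasing_word_def subposet_iso_label_word[OF iso chain]
    using set_label_word_subset_Eset[OF chain a1_partition]
    by (rule strict_mono_on_sorted_wrt_less_iff[OF mono])
qed

lemma subposet_iso_lex_le:
  assumes iso: "subposet_iso n1 a1 b1 n2 a2 b2 g f"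
    and chains: "max_chain n1 a1 b1 cs" "max_chain n1 a1 b1 ds"
    and le: "lex_le (label_word com_label cs) (label_word com_label ds)"
  shows "lex_le (label_word com_label (map g cs)) (label_word com_label (map g ds))"
proof -
  have mono: "strict_mono_on (Eset n1 a1 b1) f" and a1_partition: "a1 \<in> partitions n1"
    using iso unfolding subposet_iso_def by blast+
  note labels = set_label_word_subset_Eset[OF chains(1) a1_partition]
    set_label_word_subset_Eset[OF chains(2) a1_partition]
  show ?thesis
    using le
    unfolding lex_le_def subposet_iso_label_word[OF iso chains(1)] subposet_iso_label_word[OF iso chains(2)]
    by (auto intro: strict_mono_on_lexord_less[OF mono labels])
qed

theorem mainTheorem4:
  shows "compatible_with_isos com_label"
  unfolding compatible_with_isos_def
  by (simp add: subposet_iso_increasing_word_iff subposet_iso_lex_le)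

end
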